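(* Let $d \geq 2$ and let $\hat{\mathbf{\Sigma}}_1,\ldots,\hat{\mathbf{\Sigma}}_K \in \mathbb{R}^{d\times d}$ be symmetric positive semi-definite matrices such that \[ \lambda_1(\hat{\mathbf{\Sigma}}_j) \geq \frac{\sum_{k=1}^K\sum_{i=2}^d \lambda_i(\hat{\mathbf{\Sigma}}_k)}{K(d-1)} \quad \text{for all } j\in\{1,\ldots,K\}. \] Then a solution of \[ \min_{\hat{\mathbf{x}}_1,\ldots,\hat{\mathbf{x}}_K \in \mathbb{R}^d,\ \hat{\sigma}^2} \ \sum_{k=1}^K \big\|\hat{\mathbf{\Sigma}}_k - (\hat{\mathbf{x}}_k\hat{\mathbf{x}}_k^\mathrm{T} + \hat{\sigma}^2 \mathbf{I})\big\|_\mathrm{F}^2 \] is given by \[ \sigma^2_{\mathrm{GMM}} = \frac{1}{K}\sum_{k=1}^K \frac{\mathrm{tr}(\hat{\mathbf{\Sigma}}_k) - \lambda_1(\hat{\mathbf{\Sigma}}_k)}{d-1},\qquad \mathbf{x}_{\mathrm{GMM},k} = \sqrt{\lambda_1(\hat{\mathbf{\Sigma}}_k) - \sigma^2_{\mathrm{GMM}}}\ \mathbf{v}_1(\hat{\mathbf{\Sigma}}_k)\quad (k=1,\ldots,K), \] where $\mathbf{v}_1(\hat{\mathbf{\Sigma}}_k)$ is a unit eigenvector associated with $\lambda_1(\hat{\mathbf{\Sigma}}_k)$.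
   Context: $\lambda_i(\mathbf{M})$ denotes the $i$-th largest eigenvalue of a symmetric positive semi-definite matrix $\mathbf{M}$ (equal to its $i$-th largest singular value); $\mathbf{I}$ is the $d\times d$ identity; $\|\cdot\|_\mathrm{F}$ is the Frobenius norm. *)

theory Defs
  imports "Jordan_Normal_Form.Matrix" "Jordan_Normal_Form.Char_Poly"
          "HOL-Computational_Algebra.Polynomial"
begin

definition mat_trace :: "real mat \<Rightarrow> real" where
  "mat_trace A = (\<Sum>i<dim_row A. A $$ (i, i))"

definition frob_sq :: "real mat \<Rightarrow> real" where
  "frob_sq A = (\<Sum>i<dim_row A. \<Sum>j<dim_col A. (A $$ (i, j))^2)"

definition eig_list :: "real mat \<Rightarrow> real list" where
  "eig_list A = rev (sorted_list_of_multiset (proots (char_poly A)))"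

text \<open>lambda_i(A), the i-th largest eigenvalue, 1-based index i.\<close>
definition eig :: "real mat \<Rightarrow> nat \<Rightarrow> real" where
  "eig A i = eig_list A ! (i - 1)"

definition symmetric_mat :: "real mat \<Rightarrow> bool" where
  "symmetric_mat A \<longleftrightarrow> transpose_mat A = A"

definition psd_mat :: "real mat \<Rightarrow> bool" where
  "psd_mat A \<longleftrightarrow> (\<forall>v \<in> carrier_vec (dim_row A). 0 \<le> v \<bullet> (A *\<^sub>v v))"

definition outer :: "real vec \<Rightarrow> real mat" where
  "outer x = mat (dim_vec x) (dim_vec x) (\<lambda>(i, j). x $ i * x $ j)"

definition gmm_obj :: "nat \<Rightarrow> nat \<Rightarrow> (nat \<Rightarrow> real mat) \<Rightarrow> (nat \<Rightarrow> real vec) \<Rightarrow> real \<Rightarrow> real" where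
  "gmm_obj d K S x s = (\<Sum>k<K. frob_sq (S k - (outer (x k) + s \<cdot>\<^sub>m 1\<^sub>m d)))"

end

theory Submission
  imports Defs "Jordan_Normal_Form.Schur_Decomposition"
begin

text \<open>Expanding the Frobenius norm gives, for symmetric \<open>S\<close> of size \<open>d\<close>,
  \<open>\<parallel>S - x x\<^sup>T - s I\<parallel>\<^sup>2 = \<parallel>S\<parallel>\<^sup>2 + |x|\<^sup>4 + d s\<^sup>2 - 2 x\<^sup>T S x - 2 s tr S + 2 s |x|\<^sup>2\<close>.
  The Rayleigh bound \<open>x\<^sup>T S x \<le> \<lambda>\<^sub>1 |x|\<^sup>2\<close> and completing the square in \<open>|x|\<^sup>2\<close> bound this
  from below by \<open>\<parallel>S\<parallel>\<^sup>2 + d s\<^sup>2 - 2 s tr S - (\<lambda>\<^sub>1 - s)\<^sup>2\<close>, with equality at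
  \<open>x = \<surd>(\<lambda>\<^sub>1 - s) v\<^sub>1\<close> whenever \<open>s \<le> \<lambda>\<^sub>1\<close>. Summed over \<open>k\<close>, the lower bound is a
  quadratic in \<open>s\<close> with leading coefficient \<open>K (d - 1)\<close>, minimal at \<open>\<sigma>\<close>; since
  \<open>tr S - \<lambda>\<^sub>1 = \<lambda>\<^sub>2 + \<dots> + \<lambda>\<^sub>d\<close>, the hypothesis says exactly \<open>\<sigma> \<le> \<lambda>\<^sub>1(S\<^sub>k)\<close>, so the
  bound is attained. Both spectral facts come from the orthogonal diagonalisation of real
  symmetric matrices, proved by deflation along a unit eigenvector.\<close>

text \<open>Not the library's \<^const>\<open>orthogonal_mat\<close>, which only asks for pairwise orthogonal columns.\<close>

definition orthonormal_mat :: "nat \<Rightarrow> real mat \<Rightarrow> bool" where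
  "orthonormal_mat n U \<longleftrightarrow> U \<in> carrier_mat n n \<and> transpose_mat U * U = 1\<^sub>m n"

lemma orthonormal_mat_right_inverse:
  assumes "orthonormal_mat n U"
  shows "U * transpose_mat U = 1\<^sub>m n"
  using assms mat_mult_left_right_inverse[of "transpose_mat U" n U]
  by (auto simp: orthonormal_mat_def)

lemma orthonormal_mat_mult:
  assumes U: "orthonormal_mat n U" and V: "orthonormal_mat n V"
  shows "orthonormal_mat n (U * V)"
proof -
  have c: "U \<in> carrier_mat n n" "V \<in> carrier_mat n n"
    using U V by (auto simp: orthonormal_mat_def)
  have "transpose_mat (U * V) * (U * V) = transpose_mat V * ((transpose_mat U * U) * V)"
    using c by (simp add: transpose_mult assoc_mult_mat[of _ n n _ n _ n])
  also have "\<dots> = 1\<^sub>m n" using U V c by (simp add: orthonormal_mat_def)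
  finally show ?thesis using c by (simp add: orthonormal_mat_def)
qed

lemma orthonormal_mat_block_diag:
  assumes "orthonormal_mat m U"
  shows "orthonormal_mat (Suc m) (four_block_mat (1\<^sub>m 1) (0\<^sub>m 1 m) (0\<^sub>m m 1) U)"
proof -
  have U: "U \<in> carrier_mat m m" and UU: "transpose_mat U * U = 1\<^sub>m m"
    using assms by (auto simp: orthonormal_mat_def)
  have "transpose_mat (four_block_mat (1\<^sub>m 1) (0\<^sub>m 1 m) (0\<^sub>m m 1) U) =
      four_block_mat (1\<^sub>m 1) (0\<^sub>m 1 m) (0\<^sub>m m 1) (transpose_mat U)"
    using U by (subst transpose_four_block_mat) auto
  with U UU show ?thesis unfolding orthonormal_mat_def
    by (simp, subst mult_four_block_mat[of _ 1 1 _ m _ m _ _ 1 _ m]) auto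
qed

lemma conjugate_of_real_mult_mat_vec:
  fixes A :: "real mat"
  assumes A: "A \<in> carrier_mat n m" and w: "w \<in> carrier_vec m"
  shows "conjugate (map_mat complex_of_real A *\<^sub>v w)
    = map_mat complex_of_real A *\<^sub>v conjugate w"
proof (rule eq_vecI)
  fix i assume "i < dim_vec (map_mat complex_of_real A *\<^sub>v conjugate w)"
  then have i: "i < n" using A by simp
  have "conjugate (row (map_mat complex_of_real A) i) = row (map_mat complex_of_real A) i"
    using A i by (intro eq_vecI) auto
  then show "conjugate (map_mat complex_of_real A *\<^sub>v w) $ i
      = (map_mat complex_of_real A *\<^sub>v conjugate w) $ i"
    using A w i conjugate_sprod_vec[of "row (map_mat complex_of_real A) i" m w] by simp
qed (use A in simp)

lemma symmetric_mat_complex_eigenvalue_real: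
  fixes S :: "real mat"
  assumes S: "S \<in> carrier_mat n n" and sym: "symmetric_mat S"
    and ev: "eigenvalue (map_mat complex_of_real S) z"
  shows "z \<in> \<real>"
proof -
  let ?C = "map_mat complex_of_real S"
  obtain w where w: "w \<in> carrier_vec n" "w \<noteq> 0\<^sub>v n" and Cw: "?C *\<^sub>v w = z \<cdot>\<^sub>v w"
    using ev S unfolding eigenvalue_def eigenvector_def by auto
  have C: "?C \<in> carrier_mat n n" and symC: "transpose_mat ?C = ?C"
    using S sym by (auto simp: symmetric_mat_def map_mat_transpose)
  have C_conj: "?C *\<^sub>v conjugate w = conjugate z \<cdot>\<^sub>v conjugate w"
    using conjugate_of_real_mult_mat_vec[OF S w(1)] Cw by (simp add: conjugate_smult_vec)
  have "z * (conjugate w \<bullet> w) = conjugate w \<bullet> (?C *\<^sub>v w)"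
    using w Cw by simp
  also have "\<dots> = (transpose_mat ?C *\<^sub>v conjugate w) \<bullet> w"
    using transpose_vec_mult_scalar[OF C w(1), of "conjugate w"] w by simp
  also have "\<dots> = conjugate z * (conjugate w \<bullet> w)"
    using symC C_conj w by simp
  finally have "z * (w \<bullet>c w) = cnj z * (w \<bullet>c w)"
    using w by (simp add: comm_scalar_prod[of w n "conjugate w"])
  moreover have "w \<bullet>c w \<noteq> 0" using w by simp
  ultimately show ?thesis by (simp add: Reals_cnj_iff)
qed

lemma symmetric_mat_has_eigenvalue:
  fixes S :: "real mat"
  assumes S: "S \<in> carrier_mat n n" and sym: "symmetric_mat S" and n: "n > 0"
  shows "\<exists>\<mu>. eigenvalue S \<mu>"
proof -
  let ?C = "map_mat complex_of_real S"
  have C: "?C \<in> carrier_mat n n" using S by simp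
  obtain as where cp: "char_poly ?C = (\<Prod>a\<leftarrow>as. [:- a, 1:])" and len: "length as = n"
    using char_poly_factorized[OF C] by blast
  obtain z where "z \<in> set as" using len n by (cases as) auto
  then have "poly (char_poly ?C) z = 0" unfolding cp by (simp add: poly_prod_list)
  then have "eigenvalue ?C z" using eigenvalue_root_char_poly[OF C] by simp
  then obtain r where r: "z = complex_of_real r"
    using symmetric_mat_complex_eigenvalue_real[OF S sym] by (auto elim: Reals_cases)
  have "complex_of_real (poly (char_poly S) r) = poly (char_poly ?C) z"
    unfolding r of_real_hom.char_poly_hom[OF S] of_real_hom.poly_map_poly ..
  with \<open>poly (char_poly ?C) z = 0\<close> have "poly (char_poly S) r = 0" by simp
  then show ?thesis using eigenvalue_root_char_poly[OF S] by blast
qed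

lemma unit_eigenvector_exists:
  fixes S :: "real mat"
  assumes S: "S \<in> carrier_mat n n" and ev: "eigenvalue S \<mu>"
  shows "\<exists>u. u \<in> carrier_vec n \<and> u \<bullet> u = 1 \<and> S *\<^sub>v u = \<mu> \<cdot>\<^sub>v u"
proof -
  obtain v where v: "v \<in> carrier_vec n" "v \<noteq> 0\<^sub>v n" "S *\<^sub>v v = \<mu> \<cdot>\<^sub>v v"
    using ev S unfolding eigenvalue_def eigenvector_def by auto
  have "v \<bullet> v > 0" using conjugate_square_greater_0_vec[OF v(1)] v(2) by simp
  then show ?thesis using v S
    by (intro exI[of _ "(1 / sqrt (v \<bullet> v)) \<cdot>\<^sub>v v"])
      (auto simp: mult_mat_vec smult_smult_assoc mult.commute)
qed

lemma orthonormal_mat_of_orthogonal_cols: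
  fixes ws :: "real vec list"
  assumes orth: "corthogonal ws" and car: "set ws \<subseteq> carrier_vec n" and len: "length ws = n"
  shows "orthonormal_mat n (mat_of_cols n (map (\<lambda>w. (1 / sqrt (w \<bullet> w)) \<cdot>\<^sub>v w) ws))"
    (is "orthonormal_mat n ?W")
proof -
  have pos: "ws ! i \<bullet> ws ! i > 0" if "i < n" for i
  proof -
    have "ws ! i \<bullet> ws ! i \<noteq> 0" using corthogonalD[OF orth, of i i] len that by simp
    moreover have "ws ! i \<bullet> ws ! i \<ge> 0" using conjugate_square_ge_0_vec[of "ws ! i"] by simp
    ultimately show ?thesis by simp
  qed
  have "col ?W i \<bullet> col ?W j = (if i = j then 1 else 0)" if ij: "i < n" "j < n" for i j
  proof -
    have "ws ! i \<in> carrier_vec n" "ws ! j \<in> carrier_vec n" using car len ij by auto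
    then have "col ?W i \<bullet> col ?W j
        = (1 / sqrt (ws ! i \<bullet> ws ! i)) * (1 / sqrt (ws ! j \<bullet> ws ! j)) * (ws ! i \<bullet> ws ! j)"
      using ij len by simp
    also have "\<dots> = (if i = j then 1 else 0)"
      using corthogonalD[OF orth, of i j] pos[OF ij(1)] ij len by (auto simp: field_simps)
    finally show ?thesis .
  qed
  then show ?thesis unfolding orthonormal_mat_def using len by (intro conjI eq_matI) auto
qed

lemma unit_vec_extends_to_orthonormal_mat:
  fixes u :: "real vec"
  assumes u: "u \<in> carrier_vec n" and uu: "u \<bullet> u = 1"
  shows "\<exists>W. orthonormal_mat n W \<and> col W 0 = u"
proof -
  interpret cof_vec_space n "TYPE(real)" .
  have "u \<noteq> 0\<^sub>v n" using uu u by auto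
  note bc = basis_completion[OF u this]
  define ws where "ws = gram_schmidt n (basis_completion u)"
  have ws: "corthogonal ws" "set ws \<subseteq> carrier_vec n" "length ws = n"
    using gram_schmidt_result[OF bc(2) bc(4) bc(5) ws_def] bc(6) by auto
  have "n > 0" using u uu by (cases "n = 0") (auto simp: scalar_prod_def)
  then obtain bs where "basis_completion u = u # bs"
    using bc(6) bc(7) by (cases "basis_completion u") auto
  then have "ws ! 0 = u" using ws(3) \<open>n > 0\<close> gram_schmidt_hd[OF u] unfolding ws_def
    by (metis hd_conv_nth list.size(3) not_less0)
  then have "col (mat_of_cols n (map (\<lambda>w. (1 / sqrt (w \<bullet> w)) \<cdot>\<^sub>v w) ws)) 0 = u"
    using ws(3) \<open>n > 0\<close> u uu by (subst col_mat_of_cols) auto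
  with orthonormal_mat_of_orthogonal_cols[OF ws] show ?thesis by blast
qed

lemma symmetric_mat_transpose_conj:
  assumes S: "S \<in> carrier_mat n n" and sym: "symmetric_mat S" and W: "W \<in> carrier_mat n k"
  shows "symmetric_mat (transpose_mat W * S * W)"
proof -
  have SW: "S * W \<in> carrier_mat n k" using S W by simp
  have "transpose_mat (transpose_mat W * (S * W)) = transpose_mat (S * W) * W"
    using transpose_mult[of "transpose_mat W" k n "S * W" k] SW W by simp
  also have "transpose_mat (S * W) = transpose_mat W * S"
    using transpose_mult[OF S W] sym by (simp add: symmetric_mat_def)
  finally show ?thesis using S W by (simp add: symmetric_mat_def)
qed

lemma orthonormal_deflation:
  fixes S :: "real mat"
  assumes S: "S \<in> carrier_mat (Suc m) (Suc m)" and sym: "symmetric_mat S"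
    and W: "orthonormal_mat (Suc m) W" and Su: "S *\<^sub>v col W 0 = \<mu> \<cdot>\<^sub>v col W 0"
  shows "\<exists>B. B \<in> carrier_mat m m \<and> symmetric_mat B \<and>
    transpose_mat W * S * W = four_block_mat (mat 1 1 (\<lambda>_. \<mu>)) (0\<^sub>m 1 m) (0\<^sub>m m 1) B"
proof -
  let ?n = "Suc m"
  define A where "A = transpose_mat W * S * W"
  define B where "B = mat m m (\<lambda>(i, j). A $$ (Suc i, Suc j))"
  have Wc: "W \<in> carrier_mat ?n ?n" and WW: "transpose_mat W * W = 1\<^sub>m ?n"
    using W by (auto simp: orthonormal_mat_def)
  have A: "A \<in> carrier_mat ?n ?n" using Wc S by (simp add: A_def)
  have symA: "transpose_mat A = A"
    using symmetric_mat_transpose_conj[OF S sym Wc] by (simp add: A_def symmetric_mat_def)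
  have A_col0: "A $$ (i, 0) = (if i = 0 then \<mu> else 0)" if i: "i < ?n" for i
  proof -
    have "A $$ (i, 0) = col W i \<bullet> (S *\<^sub>v col W 0)"
      using i Wc S by (simp add: A_def mult_mat_vec_def)
    also have "\<dots> = \<mu> * (transpose_mat W * W) $$ (i, 0)"
      using i Wc Su by simp
    finally show ?thesis using i WW by simp
  qed
  have A_row0: "A $$ (0, j) = (if j = 0 then \<mu> else 0)" if j: "j < ?n" for j
    using A_col0[OF j] symA A j by (metis index_transpose_mat(1) carrier_matD zero_less_Suc)
  have "A = four_block_mat (mat 1 1 (\<lambda>_. \<mu>)) (0\<^sub>m 1 m) (0\<^sub>m m 1) B"
    by (rule eq_matI) (use A A_col0 A_row0 in \<open>auto simp: B_def less_Suc_eq_0_disj\<close>)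
  moreover have "symmetric_mat B"
    using symA A unfolding symmetric_mat_def B_def
    by (intro eq_matI) (auto, metis index_transpose_mat(1) carrier_matD Suc_less_eq)
  moreover have "B \<in> carrier_mat m m" by (simp add: B_def)
  ultimately show ?thesis unfolding A_def by blast
qed

lemma transpose_mult_conj:
  fixes S W F :: "real mat"
  assumes "S \<in> carrier_mat n n" "W \<in> carrier_mat n n" "F \<in> carrier_mat n n"
  shows "transpose_mat (W * F) * S * (W * F) = transpose_mat F * (transpose_mat W * S * W) * F"
  using assms by (simp add: transpose_mult[of _ n n] assoc_mult_mat[of _ n n _ n _ n])

lemma block_diag_transpose_conj:
  fixes B V :: "'a :: comm_ring_1 mat"
  assumes B: "B \<in> carrier_mat m m" and V: "V \<in> carrier_mat m m"
  shows "transpose_mat (four_block_mat (1\<^sub>m 1) (0\<^sub>m 1 m) (0\<^sub>m m 1) V)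
      * four_block_mat (mat 1 1 (\<lambda>_. \<mu>)) (0\<^sub>m 1 m) (0\<^sub>m m 1) B
      * four_block_mat (1\<^sub>m 1) (0\<^sub>m 1 m) (0\<^sub>m m 1) V
    = four_block_mat (mat 1 1 (\<lambda>_. \<mu>)) (0\<^sub>m 1 m) (0\<^sub>m m 1) (transpose_mat V * B * V)"
  using B V
  by (subst transpose_four_block_mat, auto, subst mult_four_block_mat[of _ 1 1 _ m _ m _ _ 1 _ m], auto,
      subst mult_four_block_mat[of _ 1 1 _ m _ m _ _ 1 _ m], auto)

lemma symmetric_mat_orthogonally_diagonalizable:
  fixes S :: "real mat"
  assumes "S \<in> carrier_mat n n" and "symmetric_mat S"
  shows "\<exists>U f. orthonormal_mat n U \<and> transpose_mat U * S * U = mat_diag n f"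
  using assms
proof (induction n arbitrary: S)
  case 0
  then show ?case
    by (intro exI[of _ "1\<^sub>m 0"] exI[of _ "\<lambda>_. 0"]) (auto simp: orthonormal_mat_def mat_diag_def)
next
  case (Suc m)
  obtain \<mu> where "eigenvalue S \<mu>" using symmetric_mat_has_eigenvalue[OF Suc.prems] by blast
  then obtain u where u: "u \<in> carrier_vec (Suc m)" "u \<bullet> u = 1" "S *\<^sub>v u = \<mu> \<cdot>\<^sub>v u"
    using unit_eigenvector_exists Suc.prems(1) by blast
  obtain W where W: "orthonormal_mat (Suc m) W" and "col W 0 = u"
    using unit_vec_extends_to_orthonormal_mat[OF u(1,2)] by blast
  then obtain B where B: "B \<in> carrier_mat m m" "symmetric_mat B"
    and WSW: "transpose_mat W * S * W = four_block_mat (mat 1 1 (\<lambda>_. \<mu>)) (0\<^sub>m 1 m) (0\<^sub>m m 1) B"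
    using orthonormal_deflation[OF Suc.prems W] u(3) by blast
  obtain V g where V: "orthonormal_mat m V" and VBV: "transpose_mat V * B * V = mat_diag m g"
    using Suc.IH[OF B] by blast
  define F where "F = four_block_mat (1\<^sub>m 1) (0\<^sub>m 1 m) (0\<^sub>m m 1) V"
  have F: "orthonormal_mat (Suc m) F" unfolding F_def by (rule orthonormal_mat_block_diag[OF V])
  have "transpose_mat (W * F) * S * (W * F) = transpose_mat F * (transpose_mat W * S * W) * F"
    using Suc.prems(1) W F by (intro transpose_mult_conj) (auto simp: orthonormal_mat_def)
  also have "\<dots> = four_block_mat (mat 1 1 (\<lambda>_. \<mu>)) (0\<^sub>m 1 m) (0\<^sub>m m 1) (mat_diag m g)"
    unfolding WSW F_def VBV[symmetric] using B V
    by (intro block_diag_transpose_conj) (auto simp: orthonormal_mat_def)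
  also have "\<dots> = mat_diag (Suc m) (\<lambda>i. if i = 0 then \<mu> else g (i - 1))"
    by (intro eq_matI) (auto simp: mat_diag_def)
  finally show ?case using orthonormal_mat_mult[OF W F] by blast
qed

lemma orthonormal_diagonalization_inverse:
  assumes U: "orthonormal_mat n U" and S: "S \<in> carrier_mat n n"
    and diag: "transpose_mat U * S * U = D"
  shows "S = U * D * transpose_mat U"
proof -
  have Uc: "U \<in> carrier_mat n n" using U by (simp add: orthonormal_mat_def)
  have "U * D * transpose_mat U = (U * transpose_mat U) * S * (U * transpose_mat U)"
    using Uc S by (simp add: diag[symmetric] assoc_mult_mat[of _ n n _ n _ n])
  then show ?thesis using orthonormal_mat_right_inverse[OF U] S by simp
qed

lemma proots_prod_linear: "proots (\<Prod>a\<leftarrow>xs. [:- a, 1:]) = mset (xs :: 'a::idom list)"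
proof (induction xs)
  case (Cons a xs)
  have "(\<Prod>a\<leftarrow>xs. [:- a, 1:]) \<noteq> 0" by auto
  with Cons show ?case by (simp add: proots_mult del: mult_pCons_left)
qed simp

lemma mat_trace_mult_comm:
  fixes A B :: "real mat"
  assumes A: "A \<in> carrier_mat n m" and B: "B \<in> carrier_mat m n"
  shows "mat_trace (A * B) = mat_trace (B * A)"
proof -
  have "mat_trace (A * B) = (\<Sum>i<n. \<Sum>j<m. A $$ (i, j) * B $$ (j, i))"
    unfolding mat_trace_def using A B
    by (auto simp: scalar_prod_def atLeast0LessThan intro!: sum.cong)
  also have "\<dots> = (\<Sum>j<m. \<Sum>i<n. B $$ (j, i) * A $$ (i, j))"
    by (subst sum.swap) (simp add: mult.commute)
  also have "\<dots> = mat_trace (B * A)"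
    unfolding mat_trace_def using A B
    by (auto simp: scalar_prod_def atLeast0LessThan intro!: sum.cong)
  finally show ?thesis .
qed

lemma mat_diag_mult_vec:
  assumes "v \<in> carrier_vec n"
  shows "mat_diag n f *\<^sub>v v = vec n (\<lambda>i. f i * v $ i)"
proof (rule eq_vecI, insert assms, auto simp: mat_diag_def scalar_prod_def, goal_cases)
  case (1 i)
  then show ?case by (subst sum.remove[of _ i]) auto
qed

context
  fixes S U :: "real mat" and f :: "nat \<Rightarrow> real" and n :: nat
  assumes U: "orthonormal_mat n U" and S: "S = U * mat_diag n f * transpose_mat U"
begin

lemma eig_list_orthonormal_diag: "eig_list S = rev (sort (map f [0..<n]))"
proof -
  have Uc: "U \<in> carrier_mat n n" using U by (simp add: orthonormal_mat_def)
  have "similar_mat S (mat_diag n f)"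
    unfolding similar_mat_def similar_mat_wit_def
    using U Uc orthonormal_mat_right_inverse[OF U] S
    by (intro exI[of _ U] exI[of _ "transpose_mat U"]) (auto simp: orthonormal_mat_def Let_def)
  moreover have "diag_mat (mat_diag n f) = map f [0..<n]"
    by (intro nth_equalityI) (auto simp: diag_mat_def mat_diag_def)
  ultimately have "char_poly S = (\<Prod>a\<leftarrow>map f [0..<n]. [:- a, 1:])"
    using char_poly_similar char_poly_upper_triangular[of "mat_diag n f" n]
    by (fastforce simp: upper_triangular_def mat_diag_def)
  then show ?thesis
    unfolding eig_list_def by (simp only: proots_prod_linear sorted_list_of_multiset_mset)
qed

lemma mat_trace_orthonormal_diag: "mat_trace S = (\<Sum>i<n. f i)"
proof -
  have Uc: "U \<in> carrier_mat n n" using U by (simp add: orthonormal_mat_def)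
  have "mat_diag n f * transpose_mat U \<in> carrier_mat n n"
    using mult_carrier_mat[OF mat_diag_dim, of "transpose_mat U" n] Uc by simp
  then have "mat_trace S = mat_trace (mat_diag n f * transpose_mat U * U)"
    using mat_trace_mult_comm[OF Uc] Uc
    by (simp add: S assoc_mult_mat[of U n n "mat_diag n f" n "transpose_mat U" n])
  also have "mat_diag n f * transpose_mat U * U = mat_diag n f * (transpose_mat U * U)"
    using Uc by (simp add: assoc_mult_mat[of _ n n _ n _ n])
  also have "\<dots> = mat_diag n f"
    using U by (simp add: orthonormal_mat_def right_mult_one_mat[OF mat_diag_dim])
  finally show ?thesis by (simp add: mat_trace_def mat_diag_def)
qed

lemma quadratic_form_orthonormal_diag_le:
  assumes x: "x \<in> carrier_vec n" and c: "\<And>i. i < n \<Longrightarrow> f i \<le> c"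
  shows "x \<bullet> (S *\<^sub>v x) \<le> c * (x \<bullet> x)"
proof -
  have Uc: "U \<in> carrier_mat n n" using U by (simp add: orthonormal_mat_def)
  define y where "y = transpose_mat U *\<^sub>v x"
  have y: "y \<in> carrier_vec n" using Uc x by (simp add: y_def)
  have "S *\<^sub>v x = U *\<^sub>v (mat_diag n f *\<^sub>v y)"
    using Uc x by (simp add: S y_def assoc_mult_mat_vec[of _ n n _ n])
  then have "x \<bullet> (S *\<^sub>v x) = y \<bullet> (mat_diag n f *\<^sub>v y)"
    using transpose_vec_mult_scalar[OF Uc _ x, of "mat_diag n f *\<^sub>v y"]
      mult_mat_vec_carrier[OF mat_diag_dim y]
    by (simp add: y_def)
  also have "mat_diag n f *\<^sub>v y = vec n (\<lambda>i. f i * y $ i)"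
    using y by (rule mat_diag_mult_vec)
  also have "y \<bullet> vec n (\<lambda>i. f i * y $ i) = (\<Sum>i<n. f i * (y $ i)^2)"
    using y by (simp add: scalar_prod_def atLeast0LessThan power2_eq_square mult.left_commute)
  also have "\<dots> \<le> (\<Sum>i<n. c * (y $ i)^2)"
    by (intro sum_mono mult_right_mono c) auto
  also have "\<dots> = c * (y \<bullet> y)"
    using y by (simp add: scalar_prod_def sum_distrib_left atLeast0LessThan power2_eq_square)
  also have "y \<bullet> y = x \<bullet> x"
    using transpose_vec_mult_scalar[OF Uc y x] orthonormal_mat_right_inverse[OF U] Uc x
    by (simp add: y_def assoc_mult_mat_vec[symmetric, of _ n n _ n])
  finally show ?thesis .
qed

end

lemma le_rev_sort_nth_0:
  fixes xs :: "'a :: linorder list"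
  assumes "x \<in> set xs"
  shows "x \<le> rev (sort xs) ! 0"
proof -
  obtain j where j: "j < length xs" "sort xs ! j = x"
    using assms by (metis in_set_conv_nth length_sort set_sort)
  then have "sort xs ! j \<le> sort xs ! (length xs - 1)"
    by (intro sorted_nth_mono) auto
  then show ?thesis using j rev_nth[of 0 "sort xs"] by (cases xs) auto
qed

lemma sum_list_tail_nth:
  fixes xs :: "'a :: ab_group_add list"
  assumes "length xs = d" "d \<ge> 1"
  shows "(\<Sum>i=2..d. xs ! (i - 1)) = sum_list xs - xs ! 0"
proof -
  have "(\<Sum>i=2..d. xs ! (i - 1)) = (\<Sum>i=Suc 1..Suc (d - 1). xs ! (i - 1))"
    using assms(2) by (simp add: numeral_2_eq_2)
  also have "\<dots> = (\<Sum>i=Suc 0..<d. xs ! i)"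
    using assms(2) by (subst sum.shift_bounds_cl_Suc_ivl) (intro sum.cong, auto)
  also have "\<dots> = sum_list xs - xs ! 0"
    using sum.atLeast_Suc_lessThan[of 0 d "\<lambda>i. xs ! i"] assms by (simp add: sum_list_sum_nth)
  finally show ?thesis .
qed

lemma symmetric_mat_sum_eig_tail:
  assumes S: "S \<in> carrier_mat d d" and sym: "symmetric_mat S" and d: "d \<ge> 1"
  shows "(\<Sum>i=2..d. eig S i) = mat_trace S - eig S 1"
proof -
  obtain U f where U: "orthonormal_mat d U" and "transpose_mat U * S * U = mat_diag d f"
    using symmetric_mat_orthogonally_diagonalizable[OF S sym] by blast
  then have SU: "S = U * mat_diag d f * transpose_mat U"
    using orthonormal_diagonalization_inverse S by blast
  have "sum_list (sort (map f [0..<d])) = sum_list (map f [0..<d])"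
    by (metis mset_sort sum_mset_sum_list)
  then have "sum_list (eig_list S) = mat_trace S"
    using eig_list_orthonormal_diag[OF U SU] mat_trace_orthonormal_diag[OF U SU]
    by (simp add: interv_sum_list_conv_sum_set_nat atLeast0LessThan)
  then show ?thesis
    using sum_list_tail_nth[of "eig_list S" d] d eig_list_orthonormal_diag[OF U SU]
    by (simp add: eig_def)
qed

lemma symmetric_mat_quadratic_form_le_eig_1:
  assumes S: "S \<in> carrier_mat d d" and sym: "symmetric_mat S" and x: "x \<in> carrier_vec d"
  shows "x \<bullet> (S *\<^sub>v x) \<le> eig S 1 * (x \<bullet> x)"
proof -
  obtain U f where U: "orthonormal_mat d U" and "transpose_mat U * S * U = mat_diag d f"
    using symmetric_mat_orthogonally_diagonalizable[OF S sym] by blast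
  then have SU: "S = U * mat_diag d f * transpose_mat U"
    using orthonormal_diagonalization_inverse S by blast
  have "f i \<le> eig S 1" if "i < d" for i
    using le_rev_sort_nth_0[of "f i" "map f [0..<d]"] that
    by (simp add: eig_def eig_list_orthonormal_diag[OF U SU])
  then show ?thesis using quadratic_form_orthonormal_diag_le[OF U SU x] by blast
qed

lemma frob_sq_sub_outer_shift:
  fixes S :: "real mat"
  assumes S: "S \<in> carrier_mat d d" and x: "x \<in> carrier_vec d"
  shows "frob_sq (S - (outer x + s \<cdot>\<^sub>m 1\<^sub>m d)) =
    frob_sq S + (x \<bullet> x)^2 + real d * s^2 - 2 * (x \<bullet> (S *\<^sub>v x))
      - 2 * s * mat_trace S + 2 * s * (x \<bullet> x)"
proof -
  have ent: "(S - (outer x + s \<cdot>\<^sub>m 1\<^sub>m d)) $$ (i,j)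
      = S $$ (i,j) - x $ i * x $ j - (if i = j then s else 0)"
    if "i < d" "j < d" for i j using that S x by (simp add: outer_def)
  have dims: "dim_row (S - (outer x + s \<cdot>\<^sub>m 1\<^sub>m d)) = d" "dim_col (S - (outer x + s \<cdot>\<^sub>m 1\<^sub>m d)) = d"
    using S x by (auto simp: outer_def)
  have row: "(\<Sum>j<d. (S $$ (i,j) - x $ i * x $ j - (if i = j then s else 0))^2) =
     (\<Sum>j<d. (S $$ (i,j))^2) + (x $ i)^2 * (\<Sum>j<d. (x $ j)^2) + s^2
     - 2 * x $ i * (\<Sum>j<d. S $$ (i,j) * x $ j) - 2 * s * S $$ (i,i) + 2 * s * (x $ i)^2"
    if i: "i < d" for i
  proof -
    have "(\<Sum>j<d. (S $$ (i,j) - x $ i * x $ j - (if i = j then s else 0))^2) =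
      (\<Sum>j<d. (S $$ (i,j))^2 + (x $ i)^2 * (x $ j)^2 - 2 * x $ i * (S $$ (i,j) * x $ j)
          + (if j = i then s^2 - 2 * s * S $$ (i,i) + 2 * s * (x $ i)^2 else 0))"
      by (rule sum.cong) (auto simp: power2_eq_square algebra_simps)
    also have "\<dots> = (\<Sum>j<d. (S $$ (i,j))^2) + (x $ i)^2 * (\<Sum>j<d. (x $ j)^2)
          - 2 * x $ i * (\<Sum>j<d. S $$ (i,j) * x $ j) + (s^2 - 2 * s * S $$ (i,i) + 2 * s * (x $ i)^2)"
      using i by (simp add: sum.distrib sum_subtractf sum_distrib_left)
    finally show ?thesis by simp
  qed
  have "frob_sq (S - (outer x + s \<cdot>\<^sub>m 1\<^sub>m d))
      = (\<Sum>i<d. \<Sum>j<d. (S $$ (i,j) - x $ i * x $ j - (if i = j then s else 0))^2)"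
    unfolding frob_sq_def dims by (intro sum.cong refl, subst ent, auto)
  also have "\<dots> = (\<Sum>i<d. (\<Sum>j<d. (S $$ (i,j))^2) + (x $ i)^2 * (\<Sum>j<d. (x $ j)^2) + s^2
     - 2 * x $ i * (\<Sum>j<d. S $$ (i,j) * x $ j) - 2 * s * S $$ (i,i) + 2 * s * (x $ i)^2)"
    by (rule sum.cong) (simp_all add: row)
  also have "\<dots> = frob_sq S + (\<Sum>i<d. (x $ i)^2) * (\<Sum>j<d. (x $ j)^2) + real d * s^2
     - 2 * (\<Sum>i<d. x $ i * (\<Sum>j<d. S $$ (i,j) * x $ j)) - 2 * s * mat_trace S + 2 * s * (\<Sum>i<d. (x $ i)^2)"
    using S
    by (simp add: sum.distrib sum_subtractf sum_distrib_left sum_distrib_right frob_sq_def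
        mat_trace_def mult.assoc) (rule sum.swap)
  also have "(\<Sum>i<d. (x $ i)^2) = x \<bullet> x"
    using x by (simp add: scalar_prod_def power2_eq_square atLeast0LessThan)
  also have "(\<Sum>i<d. x $ i * (\<Sum>j<d. S $$ (i,j) * x $ j)) = x \<bullet> (S *\<^sub>v x)"
    using x S by (simp add: scalar_prod_def mult_mat_vec_def atLeast0LessThan mult.commute)
  finally show ?thesis by (simp add: power2_eq_square)
qed

lemma frob_sq_sub_outer_shift_ge:
  assumes S: "S \<in> carrier_mat d d" and x: "x \<in> carrier_vec d"
    and bound: "x \<bullet> (S *\<^sub>v x) \<le> a * (x \<bullet> x)"
  shows "frob_sq S + real d * s^2 - 2 * s * mat_trace S - (a - s)^2
    \<le> frob_sq (S - (outer x + s \<cdot>\<^sub>m 1\<^sub>m d))"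
proof -
  have "0 \<le> (x \<bullet> x - (a - s))^2" by simp
  then show ?thesis unfolding frob_sq_sub_outer_shift[OF S x] using bound
    by (simp add: power2_eq_square algebra_simps)
qed

lemma frob_sq_sub_outer_shift_eigenvector:
  assumes S: "S \<in> carrier_mat d d" and v: "v \<in> carrier_vec d"
    and Sv: "S *\<^sub>v v = a \<cdot>\<^sub>v v" and unit: "v \<bullet> v = 1" and s: "s \<le> a"
  shows "frob_sq (S - (outer (sqrt (a - s) \<cdot>\<^sub>v v) + s \<cdot>\<^sub>m 1\<^sub>m d))
    = frob_sq S + real d * s^2 - 2 * s * mat_trace S - (a - s)^2"
proof -
  let ?x = "sqrt (a - s) \<cdot>\<^sub>v v"
  have xx: "?x \<bullet> ?x = a - s" using v unit s by simp
  have "?x \<bullet> (S *\<^sub>v ?x) = (a - s) * a"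
    using S v Sv unit s by (simp add: mult_mat_vec mult.assoc mult.left_commute)
  moreover have "?x \<in> carrier_vec d" using v by simp
  ultimately show ?thesis unfolding frob_sq_sub_outer_shift[OF S \<open>?x \<in> carrier_vec d\<close>] xx
    by (simp add: power2_eq_square algebra_simps)
qed

lemma sum_shift_objective_minimal:
  fixes Q T a :: "nat \<Rightarrow> real" and d K :: nat
  assumes "d \<ge> 2" "K \<ge> 1"
  defines "\<sigma> \<equiv> (\<Sum>k<K. T k - a k) / (real K * (real d - 1))"
  shows "(\<Sum>k<K. Q k + real d * \<sigma>^2 - 2 * \<sigma> * T k - (a k - \<sigma>)^2)
    \<le> (\<Sum>k<K. Q k + real d * s^2 - 2 * s * T k - (a k - s)^2)"
proof -
  have pos: "real K * (real d - 1) > 0" using assms(1,2) by simp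
  then have sum_eq: "(\<Sum>k<K. T k - a k) = real K * (real d - 1) * \<sigma>"
    unfolding \<sigma>_def by (metis less_irrefl nonzero_mult_div_cancel_left times_divide_eq_right)
  have "(\<Sum>k<K. Q k + real d * s^2 - 2 * s * T k - (a k - s)^2)
      - (\<Sum>k<K. Q k + real d * \<sigma>^2 - 2 * \<sigma> * T k - (a k - \<sigma>)^2)
    = (\<Sum>k<K. (real d - 1) * (s^2 - \<sigma>^2) - 2 * (s - \<sigma>) * (T k - a k))"
    unfolding sum_subtractf[symmetric] by (intro sum.cong) (simp_all add: power2_eq_square algebra_simps)
  also have "\<dots> = real K * (real d - 1) * (s^2 - \<sigma>^2) - 2 * (s - \<sigma>) * (\<Sum>k<K. T k - a k)"
    by (simp add: sum_subtractf sum_distrib_left[symmetric])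
  also have "\<dots> = real K * (real d - 1) * (s - \<sigma>)^2"
    unfolding sum_eq by (simp add: power2_eq_square algebra_simps)
  also have "\<dots> \<ge> 0" using pos by simp
  finally show ?thesis by simp
qed

theorem lemma7:
  fixes d K :: nat and S :: "nat \<Rightarrow> real mat" and v :: "nat \<Rightarrow> real vec"
  assumes "d \<ge> 2"
    and "K \<ge> 1"
    and carrier: "\<And>k. k < K \<Longrightarrow> S k \<in> carrier_mat d d"
    and sym: "\<And>k. k < K \<Longrightarrow> symmetric_mat (S k)"
    and psd: "\<And>k. k < K \<Longrightarrow> psd_mat (S k)"
    and cond: "\<And>j. j < K \<Longrightarrow>
       eig (S j) 1 \<ge> (\<Sum>k<K. \<Sum>i=2..d. eig (S k) i) / (real K * (real d - 1))"
    and v_eig: "\<And>k. k < K \<Longrightarrow> eigenvector (S k) (v k) (eig (S k) 1)"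
    and v_unit: "\<And>k. k < K \<Longrightarrow> v k \<bullet> v k = 1"
  defines "\<sigma> \<equiv> (1 / real K) * (\<Sum>k<K. (mat_trace (S k) - eig (S k) 1) / (real d - 1))"
  defines "xg \<equiv> (\<lambda>k. sqrt (eig (S k) 1 - \<sigma>) \<cdot>\<^sub>v v k)"
  shows "\<forall>(x :: nat \<Rightarrow> real vec) (s :: real).
           (\<forall>k<K. x k \<in> carrier_vec d) \<longrightarrow> gmm_obj d K S xg \<sigma> \<le> gmm_obj d K S x s"
proof (intro allI impI)
  fix x :: "nat \<Rightarrow> real vec" and s :: real
  assume x: "\<forall>k<K. x k \<in> carrier_vec d"
  define bound where "bound k t = frob_sq (S k) + real d * t^2 - 2 * t * mat_trace (S k) - (eig (S k) 1 - t)^2"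
    for k t
  have tail: "(\<Sum>k<K. \<Sum>i=2..d. eig (S k) i) = (\<Sum>k<K. mat_trace (S k) - eig (S k) 1)"
    using symmetric_mat_sum_eig_tail carrier sym \<open>d \<ge> 2\<close> by (intro sum.cong) auto
  have \<sigma>_eq: "\<sigma> = (\<Sum>k<K. mat_trace (S k) - eig (S k) 1) / (real K * (real d - 1))"
    unfolding \<sigma>_def by (simp add: sum_divide_distrib[symmetric])
  have "gmm_obj d K S xg \<sigma> = (\<Sum>k<K. bound k \<sigma>)"
    unfolding gmm_obj_def xg_def bound_def
  proof (intro sum.cong refl frob_sq_sub_outer_shift_eigenvector)
    fix k assume k: "k \<in> {..<K}"
    then show "S k \<in> carrier_mat d d" "v k \<bullet> v k = 1" using carrier v_unit by auto
    show "v k \<in> carrier_vec d" "S k *\<^sub>v v k = eig (S k) 1 \<cdot>\<^sub>v v k"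
      using v_eig[of k] carrier[of k] k by (auto simp: eigenvector_def)
    show "\<sigma> \<le> eig (S k) 1" using cond[of k] k by (simp add: tail \<sigma>_eq)
  qed
  also have "\<dots> \<le> (\<Sum>k<K. bound k s)"
    unfolding bound_def \<sigma>_eq using \<open>d \<ge> 2\<close> \<open>K \<ge> 1\<close> by (rule sum_shift_objective_minimal)
  also have "\<dots> \<le> gmm_obj d K S x s"
    unfolding gmm_obj_def bound_def using carrier sym x
    by (intro sum_mono frob_sq_sub_outer_shift_ge symmetric_mat_quadratic_form_le_eig_1) auto
  finally show "gmm_obj d K S xg \<sigma> \<le> gmm_obj d K S x s" .
qed

end
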